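(* The $\varepsilon\tau$-calculi $\varepsilon\tau(\mathbf{H})$, $\varepsilon\tau(\mathbf{KC})$ and $\varepsilon\tau(\mathbf{LC})$ do not have the first $\varepsilon\tau$-theorem.
   Context: $\mathbf{H}$ is intuitionistic propositional logic; $\mathbf{KC}=\mathbf{H}+\lnot A\lor\lnot\lnot A$ (Jankov logic); $\mathbf{LC}=\mathbf{H}+(A\to B)\lor(B\to A)$ (infinite-valued Gödel logic). $\varepsilon\tau$-terms: $\varepsilon x\,A(x)$, $\tau x\,A(x)$. Critical formulas: $A(t)\to A(\varepsilon x\,A(x))$ and $A(\tau x\,A(x))\to A(t)$. $\vdash_{\varepsilon\tau(\mathbf{L})}B$: $B$ derivable in the quantifier-free first-order language with $\varepsilon\tau$-terms from critical formulas using substitution instances of theorems of $\mathbf{L}$ and modus ponens; $\vdash_{\mathbf{L}}$: the same without critical formulas. $\varepsilon\tau(\mathbf{L})$ has the first $\varepsilon\tau$-theorem if whenever $\vdash_{\varepsilon\tau(\mathbf{L})}A(e_1,\dots,e_n)$ for $\varepsilon$- or $\tau$-terms $e_i$, there are $\varepsilon\tau$-free terms $t_i^j$ with $\vdash_{\mathbf{L}}A(t_1^1,\dots,t_n^1)\lor\dots\lor A(t_1^k,\dots,t_n^k)$. *)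

theory Defs
  imports Main
begin

text \<open>Terms and formulas. Variables are de Bruijn indices; Eps A and Tau A bind
  index 0 in A. Function symbols and predicate symbols are indexed by nat.
  Negation is defined as implication to falsum.\<close>

datatype trm = Var nat | Fn nat "trm list" | Eps frm | Tau frm
and frm = FBot | Atom nat "trm list" | FImp frm frm | FAnd frm frm | FOr frm frm

definition FNeg :: "frm \<Rightarrow> frm" where "FNeg A = FImp A FBot"

primrec lift_t :: "nat \<Rightarrow> trm \<Rightarrow> trm" and lift_f :: "nat \<Rightarrow> frm \<Rightarrow> frm" where
  "lift_t k (Var i) = (if i < k then Var i else Var (Suc i))"
| "lift_t k (Fn f ts) = Fn f (map (lift_t k) ts)"
| "lift_t k (Eps A) = Eps (lift_f (Suc k) A)"
| "lift_t k (Tau A) = Tau (lift_f (Suc k) A)"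
| "lift_f k FBot = FBot"
| "lift_f k (Atom p ts) = Atom p (map (lift_t k) ts)"
| "lift_f k (FImp A B) = FImp (lift_f k A) (lift_f k B)"
| "lift_f k (FAnd A B) = FAnd (lift_f k A) (lift_f k B)"
| "lift_f k (FOr A B) = FOr (lift_f k A) (lift_f k B)"

primrec ssub_t :: "(nat \<Rightarrow> trm) \<Rightarrow> trm \<Rightarrow> trm" and ssub_f :: "(nat \<Rightarrow> trm) \<Rightarrow> frm \<Rightarrow> frm" where
  "ssub_t \<sigma> (Var i) = \<sigma> i"
| "ssub_t \<sigma> (Fn f ts) = Fn f (map (ssub_t \<sigma>) ts)"
| "ssub_t \<sigma> (Eps A) = Eps (ssub_f (\<lambda>i. case i of 0 \<Rightarrow> Var 0 | Suc j \<Rightarrow> lift_t 0 (\<sigma> j)) A)"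
| "ssub_t \<sigma> (Tau A) = Tau (ssub_f (\<lambda>i. case i of 0 \<Rightarrow> Var 0 | Suc j \<Rightarrow> lift_t 0 (\<sigma> j)) A)"
| "ssub_f \<sigma> FBot = FBot"
| "ssub_f \<sigma> (Atom p ts) = Atom p (map (ssub_t \<sigma>) ts)"
| "ssub_f \<sigma> (FImp A B) = FImp (ssub_f \<sigma> A) (ssub_f \<sigma> B)"
| "ssub_f \<sigma> (FAnd A B) = FAnd (ssub_f \<sigma> A) (ssub_f \<sigma> B)"
| "ssub_f \<sigma> (FOr A B) = FOr (ssub_f \<sigma> A) (ssub_f \<sigma> B)"

text \<open>A(t): instantiate the bound variable (index 0) of the body A by t,
  the other free variables of A are shifted down by one.\<close>

definition inst :: "frm \<Rightarrow> trm \<Rightarrow> frm" where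
  "inst A t = ssub_f (\<lambda>i. case i of 0 \<Rightarrow> t | Suc j \<Rightarrow> Var j) A"

definition inst_list :: "frm \<Rightarrow> trm list \<Rightarrow> frm" where
  "inst_list A es = ssub_f (\<lambda>i. if i < length es then es ! i else Var i) A"

primrec etfree_t :: "trm \<Rightarrow> bool" and etfree_f :: "frm \<Rightarrow> bool" where
  "etfree_t (Var i) = True"
| "etfree_t (Fn f ts) = list_all etfree_t ts"
| "etfree_t (Eps A) = False"
| "etfree_t (Tau A) = False"
| "etfree_f FBot = True"
| "etfree_f (Atom p ts) = list_all etfree_t ts"
| "etfree_f (FImp A B) = (etfree_f A \<and> etfree_f B)"
| "etfree_f (FAnd A B) = (etfree_f A \<and> etfree_f B)"
| "etfree_f (FOr A B) = (etfree_f A \<and> etfree_f B)"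

definition is_eps_tau :: "trm \<Rightarrow> bool" where
  "is_eps_tau t \<longleftrightarrow> (\<exists>A. t = Eps A \<or> t = Tau A)"

fun BigOr :: "frm list \<Rightarrow> frm" where
  "BigOr [] = FBot"
| "BigOr [A] = A"
| "BigOr (A # As) = FOr A (BigOr As)"

datatype pform = PVar nat | PBot | PImp pform pform | PAnd pform pform | POr pform pform

definition PNeg :: "pform \<Rightarrow> pform" where "PNeg A = PImp A PBot"

inductive Hthm :: "(pform \<Rightarrow> bool) \<Rightarrow> pform \<Rightarrow> bool" for Ax where
  K: "Hthm Ax (PImp A (PImp B A))"
| S: "Hthm Ax (PImp (PImp A (PImp B C)) (PImp (PImp A B) (PImp A C)))"
| conjE1: "Hthm Ax (PImp (PAnd A B) A)"
| conjE2: "Hthm Ax (PImp (PAnd A B) B)"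
| conjI: "Hthm Ax (PImp A (PImp B (PAnd A B)))"
| disjI1: "Hthm Ax (PImp A (POr A B))"
| disjI2: "Hthm Ax (PImp B (POr A B))"
| disjE: "Hthm Ax (PImp (PImp A C) (PImp (PImp B C) (PImp (POr A B) C)))"
| efq: "Hthm Ax (PImp PBot A)"
| ax: "Ax A \<Longrightarrow> Hthm Ax A"
| mp: "Hthm Ax (PImp A B) \<Longrightarrow> Hthm Ax A \<Longrightarrow> Hthm Ax B"

definition logicH :: "pform \<Rightarrow> bool" where
  "logicH = Hthm (\<lambda>_. False)"

definition logicKC :: "pform \<Rightarrow> bool" where
  "logicKC = Hthm (\<lambda>F. \<exists>A. F = POr (PNeg A) (PNeg (PNeg A)))"

definition logicLC :: "pform \<Rightarrow> bool" where
  "logicLC = Hthm (\<lambda>F. \<exists>A B. F = POr (PImp A B) (PImp B A))"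

primrec pinst :: "(nat \<Rightarrow> frm) \<Rightarrow> pform \<Rightarrow> frm" where
  "pinst \<sigma> (PVar n) = \<sigma> n"
| "pinst \<sigma> PBot = FBot"
| "pinst \<sigma> (PImp A B) = FImp (pinst \<sigma> A) (pinst \<sigma> B)"
| "pinst \<sigma> (PAnd A B) = FAnd (pinst \<sigma> A) (pinst \<sigma> B)"
| "pinst \<sigma> (POr A B) = FOr (pinst \<sigma> A) (pinst \<sigma> B)"

inductive et_deriv :: "(pform \<Rightarrow> bool) \<Rightarrow> frm \<Rightarrow> bool" for L where
  taut: "L P \<Longrightarrow> et_deriv L (pinst \<sigma> P)"
| crit_eps: "et_deriv L (FImp (inst A t) (inst A (Eps A)))"
| crit_tau: "et_deriv L (FImp (inst A (Tau A)) (inst A t))"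
| mp: "et_deriv L (FImp A B) \<Longrightarrow> et_deriv L A \<Longrightarrow> et_deriv L B"

inductive L_deriv :: "(pform \<Rightarrow> bool) \<Rightarrow> frm \<Rightarrow> bool" for L where
  taut: "L P \<Longrightarrow> L_deriv L (pinst \<sigma> P)"
| mp: "L_deriv L (FImp A B) \<Longrightarrow> L_deriv L A \<Longrightarrow> L_deriv L B"

definition first_et_theorem :: "(pform \<Rightarrow> bool) \<Rightarrow> bool" where
  "first_et_theorem L \<longleftrightarrow>
     (\<forall>A es. etfree_f A \<and> (\<forall>e\<in>set es. is_eps_tau e) \<and> et_deriv L (inst_list A es) \<longrightarrow>
        (\<exists>tss. tss \<noteq> [] \<and>
               (\<forall>ts\<in>set tss. length ts = length es \<and> (\<forall>t\<in>set ts. etfree_t t)) \<and>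
               L_deriv L (BigOr (map (inst_list A) tss))))"

end

theory Submission
  imports Defs Complex_Main
begin

text \<open>The critical formula \<open>P(\<tau>x P(x)) \<rightarrow> P(f(\<tau>x P(x)))\<close> is an instance of
  \<open>P(x) \<rightarrow> P(f(x))\<close>, so \<open>P(e) \<rightarrow> P(f(e))\<close> with \<open>e = \<tau>x P(x)\<close> is derivable in every
  \<open>\<epsilon>\<tau>\<close>-calculus. No Herbrand disjunction \<open>\<Or>\<^sub>i (P(t\<^sub>i) \<rightarrow> P(f(t\<^sub>i)))\<close> is provable in
  \<open>LC\<close>, and hence in \<open>H\<close> or \<open>KC\<close>: in the Goedel semantics on \<open>[0,1]\<close> give every atom a
  truth value that strictly decreases with the size of its arguments. Then each
  \<open>P(t\<^sub>i) \<rightarrow> P(f(t\<^sub>i))\<close> takes the value of \<open>P(f(t\<^sub>i))\<close>, which is below 1, and so does the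
  disjunction, although all provable formulas take the value 1.\<close>

definition goedel_imp :: "real \<Rightarrow> real \<Rightarrow> real" where
  "goedel_imp x y = (if x \<le> y then 1 else y)"

lemma goedel_imp_eq_1_iff [simp]: "goedel_imp x y = 1 \<longleftrightarrow> x \<le> y \<or> y = 1"
  by (auto simp: goedel_imp_def)

primrec goedel_eval :: "(nat \<Rightarrow> real) \<Rightarrow> pform \<Rightarrow> real" where
  "goedel_eval v (PVar n) = v n"
| "goedel_eval v PBot = 0"
| "goedel_eval v (PImp A B) = goedel_imp (goedel_eval v A) (goedel_eval v B)"
| "goedel_eval v (PAnd A B) = min (goedel_eval v A) (goedel_eval v B)"
| "goedel_eval v (POr A B) = max (goedel_eval v A) (goedel_eval v B)"

definition goedel_valid :: "pform \<Rightarrow> bool" where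
  "goedel_valid P \<longleftrightarrow> (\<forall>v. (\<forall>n. v n \<in> {0..1}) \<longrightarrow> goedel_eval v P = 1)"

lemma goedel_eval_range:
  assumes "\<forall>n. v n \<in> {0..1}"
  shows "0 \<le> goedel_eval v P \<and> goedel_eval v P \<le> 1"
  using assms by (induction P) (auto simp: goedel_imp_def)

lemma Hthm_goedel_valid:
  assumes Ax_valid: "\<And>A. Ax A \<Longrightarrow> goedel_valid A" and "Hthm Ax P"
  shows "goedel_valid P"
  unfolding goedel_valid_def
proof (intro allI impI)
  fix v :: "nat \<Rightarrow> real"
  assume v: "\<forall>n. v n \<in> {0..1}"
  from \<open>Hthm Ax P\<close> show "goedel_eval v P = 1"
  proof (induction rule: Hthm.induct)
    case (ax A)
    then show ?case using Ax_valid v by (simp add: goedel_valid_def)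
  next
    case (mp A B)
    then show ?case using goedel_eval_range[OF v, of B] by auto
  qed (auto simp: goedel_imp_def goedel_eval_range[OF v])
qed

lemma logicH_goedel_valid: "logicH P \<Longrightarrow> goedel_valid P"
  unfolding logicH_def by (rule Hthm_goedel_valid) auto

lemma logicKC_goedel_valid: "logicKC P \<Longrightarrow> goedel_valid P"
  unfolding logicKC_def
  by (rule Hthm_goedel_valid) (auto simp: goedel_valid_def PNeg_def goedel_imp_def)

lemma logicLC_goedel_valid: "logicLC P \<Longrightarrow> goedel_valid P"
  unfolding logicLC_def
proof (rule Hthm_goedel_valid)
  fix F assume "\<exists>A B. F = POr (PImp A B) (PImp B A)"
  then obtain A B where F: "F = POr (PImp A B) (PImp B A)" by blast
  show "goedel_valid F"
    unfolding goedel_valid_def F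
  proof (intro allI impI)
    fix v :: "nat \<Rightarrow> real"
    assume v: "\<forall>n. v n \<in> {0..1}"
    show "goedel_eval v (POr (PImp A B) (PImp B A)) = 1"
      using goedel_eval_range[OF v, of A] goedel_eval_range[OF v, of B]
      by (auto simp: goedel_imp_def)
  qed
qed

primrec fo_goedel_eval :: "(nat \<Rightarrow> trm list \<Rightarrow> real) \<Rightarrow> frm \<Rightarrow> real" where
  "fo_goedel_eval I FBot = 0"
| "fo_goedel_eval I (Atom p ts) = I p ts"
| "fo_goedel_eval I (FImp A B) = goedel_imp (fo_goedel_eval I A) (fo_goedel_eval I B)"
| "fo_goedel_eval I (FAnd A B) = min (fo_goedel_eval I A) (fo_goedel_eval I B)"
| "fo_goedel_eval I (FOr A B) = max (fo_goedel_eval I A) (fo_goedel_eval I B)"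

lemma fo_goedel_eval_pinst:
  "fo_goedel_eval I (pinst \<sigma> P) = goedel_eval (\<lambda>n. fo_goedel_eval I (\<sigma> n)) P"
  by (induction P) auto

lemma fo_goedel_eval_range:
  assumes "\<And>p ts. I p ts \<in> {0..1}"
  shows "fo_goedel_eval I F \<in> {0..1}"
  using assms by (induction F) (auto simp: goedel_imp_def)

lemma fo_goedel_eval_BigOr_less_1:
  "(\<And>F. F \<in> set Fs \<Longrightarrow> fo_goedel_eval I F < 1) \<Longrightarrow> fo_goedel_eval I (BigOr Fs) < 1"
  by (induction Fs rule: BigOr.induct) auto

lemma L_deriv_goedel_sound:
  assumes L_valid: "\<And>P. L P \<Longrightarrow> goedel_valid P"
    and I_range: "\<And>p ts. I p ts \<in> {0..1}"
    and "L_deriv L F"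
  shows "fo_goedel_eval I F = 1"
  using \<open>L_deriv L F\<close>
proof (induction rule: L_deriv.induct)
  case (taut P \<sigma>)
  have "\<forall>n. fo_goedel_eval I (\<sigma> n) \<in> {0..1}"
    using fo_goedel_eval_range I_range by blast
  then show ?case
    using L_valid[OF taut] by (simp add: fo_goedel_eval_pinst goedel_valid_def)
next
  case (mp A B)
  then show ?case using fo_goedel_eval_range[of I B] I_range by auto
qed

definition shift_frm :: frm where
  "shift_frm = FImp (Atom 0 [Var 0]) (Atom 0 [Fn 0 [Var 0]])"

definition tau_atom :: trm where
  "tau_atom = Tau (Atom 0 [Var 0])"

lemma inst_list_shift_frm:
  "inst_list shift_frm [t] = FImp (Atom 0 [t]) (Atom 0 [Fn 0 [t]])"
  by (simp add: inst_list_def shift_frm_def)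

lemma et_deriv_shift_frm_tau_atom: "et_deriv L (inst_list shift_frm [tau_atom])"
  using et_deriv.crit_tau[of L "Atom 0 [Var 0]" "Fn 0 [tau_atom]"]
  by (simp add: inst_list_shift_frm inst_def tau_atom_def)

definition size_decreasing_interp :: "nat \<Rightarrow> trm list \<Rightarrow> real" where
  "size_decreasing_interp p ts = 1 / (2 + real (size_list size ts))"

lemma fo_goedel_eval_shift_frm_less_1:
  "fo_goedel_eval size_decreasing_interp (inst_list shift_frm [t]) < 1"
  by (simp add: inst_list_shift_frm size_decreasing_interp_def goedel_imp_def field_simps)

lemma not_first_et_theorem_if_goedel_valid:
  assumes L_valid: "\<And>P. L P \<Longrightarrow> goedel_valid P"
  shows "\<not> first_et_theorem L"
proof
  assume "first_et_theorem L"
  moreover have "etfree_f shift_frm" by (simp add: shift_frm_def)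
  moreover have "is_eps_tau tau_atom" by (simp add: is_eps_tau_def tau_atom_def)
  ultimately obtain tss where tss_len: "\<forall>ts\<in>set tss. length ts = 1"
    and herbrand: "L_deriv L (BigOr (map (inst_list shift_frm) tss))"
    using et_deriv_shift_frm_tau_atom
    unfolding first_et_theorem_def by (force dest: spec[of _ shift_frm] spec[of _ "[tau_atom]"])
  have I_range: "size_decreasing_interp p ts \<in> {0..1}" for p ts
    by (simp add: size_decreasing_interp_def)
  have "fo_goedel_eval size_decreasing_interp F < 1"
    if "F \<in> set (map (inst_list shift_frm) tss)" for F
  proof -
    from that obtain ts where "ts \<in> set tss" "F = inst_list shift_frm ts" by auto
    moreover from this(1) tss_len obtain t where "ts = [t]"
      by (metis One_nat_def length_0_conv length_Suc_conv)
    ultimately show ?thesis using fo_goedel_eval_shift_frm_less_1 by simp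
  qed
  then have "fo_goedel_eval size_decreasing_interp (BigOr (map (inst_list shift_frm) tss)) < 1"
    by (rule fo_goedel_eval_BigOr_less_1)
  with L_deriv_goedel_sound[OF L_valid I_range herbrand] show False by simp
qed

theorem mainTheorem10:
  shows "\<not> first_et_theorem logicH \<and> \<not> first_et_theorem logicKC \<and> \<not> first_et_theorem logicLC"
  using not_first_et_theorem_if_goedel_valid logicH_goedel_valid logicKC_goedel_valid
    logicLC_goedel_valid by blast

end
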